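(* Let $n\ge3$ and let $M_j=(\mathbb{T}^n,g_j)$ with $g_j=e^{2f_j}g_{0,j}$, $f_j$ smooth, $g_{0,j}$ a flat metric on $\mathbb{T}^n$, $M_{0,j}=(\mathbb{T}^n,g_{0,j})$, and suppose $R_{g_j}\ge-\frac1j$ and $\operatorname{Vol}(M_j)\le V_0$. Then for every real $\alpha\ne0$, $$\frac{2}{\alpha}\Delta^{g_{0,j}}e^{\alpha f_j}+(n-2-2\alpha)|\nabla^{g_{0,j}}f_j|^2e^{\alpha f_j}\le\frac{e^{(2+\alpha)f_j}}{(n-1)j},$$ and moreover $$\int_{\mathbb{T}^n}|\nabla^{g_{0,j}}f_j|^2dV_{g_{0,j}}\le\frac{V_0^{2/n}\operatorname{Vol}(M_{0,j})^{\frac{n-2}{n}}}{(n-1)j},\qquad \int_{\mathbb{T}^n}|\nabla^{g_{0,j}}e^{-f_j}|^2dV_{g_{0,j}}\le\frac{\operatorname{Vol}(M_{0,j})}{j(n-1)(n+2)},$$ and for every $\alpha\in(0,\frac{n-2}{2})$, $$\int_{\mathbb{T}^n}|\nabla^{g_{0,j}}e^{\frac{\alpha}{2}f_j}|^2dV_{g_{0,j}}\le\frac{\alpha^2V_0^{\frac{2+\alpha}{n}}\operatorname{Vol}(M_{0,j})^{\frac{n-2-\alpha}{n}}}{4(n-2-2\alpha)(n-1)j}.$$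
   Context: $\Delta^{g}$ is the (nonpositive, analyst's) Laplace–Beltrami operator of $g$ (so $\Delta = \sum\partial_i^2$ in Euclidean coordinates), $\nabla^g$ the gradient, $R_g$ scalar curvature, $dV_g$ volume measure. For $g=e^{2f}g_0$ one has $R_g=e^{-2f}\big(R_{g_0}-2(n-1)\Delta^{g_0}f-(n-2)(n-1)|\nabla^{g_0}f|^2\big)$. *)

theory Defs
  imports "HOL-Analysis.Analysis"
begin

text \<open>A flat torus (T^n, g0) is modelled (up to isometry) as R^n / B Z^n with the Euclidean
metric, where the columns of the invertible matrix B span the lattice. Functions on the torus
are B Z^n - periodic functions on R^n.\<close>

definition pd :: "'n::finite \<Rightarrow> (real^'n \<Rightarrow> real) \<Rightarrow> real^'n \<Rightarrow> real" where
  "pd i f x = frechet_derivative f (at x) (axis i 1)"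

fun Ck :: "nat \<Rightarrow> (real^'n::finite \<Rightarrow> real) \<Rightarrow> bool" where
  "Ck 0 f = continuous_on UNIV f"
| "Ck (Suc k) f = (f differentiable_on UNIV \<and> (\<forall>i. Ck k (pd i f)))"

definition smooth :: "(real^'n::finite \<Rightarrow> real) \<Rightarrow> bool" where
  "smooth f = (\<forall>k. Ck k f)"

definition grad_sq :: "(real^'n::finite \<Rightarrow> real) \<Rightarrow> real^'n \<Rightarrow> real" where
  "grad_sq f x = (\<Sum>i\<in>UNIV. (pd i f x)\<^sup>2)"

definition lap :: "(real^'n::finite \<Rightarrow> real) \<Rightarrow> real^'n \<Rightarrow> real" where
  "lap f x = (\<Sum>i\<in>UNIV. pd i (pd i f) x)"

definition lattice_periodic :: "real^'n^'n \<Rightarrow> (real^'n::finite \<Rightarrow> real) \<Rightarrow> bool" where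
  "lattice_periodic B f = (\<forall>x i. f (x + column i B) = f x)"

definition fund_dom :: "real^'n^'n \<Rightarrow> (real^'n::finite) set" where
  "fund_dom B = {B *v t | t. \<forall>i. 0 \<le> t $ i \<and> t $ i \<le> 1}"

text \<open>Scalar curvature of g = e^{2f} g0 with g0 flat (R_{g0} = 0), by the conformal formula.\<close>
definition scal_conf :: "(real^'n::finite \<Rightarrow> real) \<Rightarrow> real^'n \<Rightarrow> real" where
  "scal_conf f x = exp (-2 * f x) * (0 - 2 * (real CARD('n) - 1) * lap f x
      - (real CARD('n) - 2) * (real CARD('n) - 1) * grad_sq f x)"

end

theory Submission
  imports Defs
begin

(*
  Write Q = 2 lap f + (n - 2) |grad f|^2.  By the conformal formula, scal_conf f >= -1/j says exactly
  Q <= e^(2f) / ((n - 1) j).  Since (2/a) lap (e^(a f)) = 2 e^(a f) (a |grad f|^2 + lap f), multiplying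
  by e^(a f) gives the pointwise inequality.  The function e^(a f) (a |grad f|^2 + lap f) is the
  divergence of the periodic field e^(a f) grad f, so its integral over a fundamental domain vanishes;
  this leaves (n - 2 - 2a) times the integral of |grad f|^2 e^(a f) bounded by the integral of
  e^((2+a) f) / ((n - 1) j), and Hoelder's inequality bounds the latter by the volume.  The vanishing
  of the integral of a partial derivative of a periodic function follows from translation invariance
  of the integral over a fundamental domain, differentiated under the integral sign by dominated
  convergence.
*)

lemma smooth_differentiable: "smooth f \<Longrightarrow> f differentiable (at x)"
  unfolding smooth_def by (metis Ck.simps(2) UNIV_I differentiable_on_def at_within_open open_UNIV)

lemma smooth_pd: "smooth f \<Longrightarrow> smooth (pd i f)"
  unfolding smooth_def by (metis Ck.simps(2))

lemma smooth_continuous: "smooth f \<Longrightarrow> continuous_on UNIV f"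
  unfolding smooth_def by (metis Ck.simps(1))

lemma pd_eq_derivative: "(f has_derivative f') (at x) \<Longrightarrow> pd i f x = f' (axis i 1)"
  unfolding pd_def by (metis frechet_derivative_at)

lemma frechet_derivative_eq_sum_pd:
  fixes h :: "real^'n::finite \<Rightarrow> real"
  assumes "h differentiable (at x)"
  shows "frechet_derivative h (at x) v = (\<Sum>i\<in>UNIV. v$i * pd i h x)"
proof -
  have lin: "linear (frechet_derivative h (at x))" using linear_frechet_derivative[OF assms] .
  have "frechet_derivative h (at x) v = frechet_derivative h (at x) (\<Sum>i\<in>UNIV. v$i *\<^sub>R axis i 1)"
    using basis_expansion[of v] by (simp add: scalar_mult_eq_scaleR)
  also have "\<dots> = (\<Sum>i\<in>UNIV. v$i * pd i h x)"
    by (simp add: linear_sum[OF lin] linear_cmul[OF lin] pd_def)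
  finally show ?thesis .
qed

lemma pd_mult:
  assumes "g differentiable (at x)" "k differentiable (at x)"
  shows "pd i (\<lambda>y. g y * k y) x = pd i g x * k x + g x * pd i k x"
  using pd_eq_derivative[OF has_derivative_mult[OF assms[unfolded frechet_derivative_works]]]
  by (simp add: pd_def)

lemma pd_const_mult:
  assumes "g differentiable (at x)"
  shows "pd i (\<lambda>y. c * g y) x = c * pd i g x"
  using pd_eq_derivative[OF has_derivative_mult_right[OF assms[unfolded frechet_derivative_works]]]
  by (simp add: pd_def)

lemma pd_exp_comp:
  assumes "\<And>x. f differentiable (at x)"
  shows "pd i (\<lambda>y. exp (a * f y)) = (\<lambda>y. a * exp (a * f y) * pd i f y)"
proof
  fix x
  have "((\<lambda>y. exp (a * f y)) has_derivative
      (\<lambda>h. exp (a * f x) * (a * frechet_derivative f (at x) h))) (at x)"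
    using assms[of x, unfolded frechet_derivative_works] by (auto intro!: derivative_eq_intros)
  from pd_eq_derivative[OF this, of i]
  show "pd i (\<lambda>y. exp (a * f y)) x = a * exp (a * f x) * pd i f x"
    by (simp add: pd_def)
qed

lemma lattice_periodic_pd:
  assumes per: "lattice_periodic B g" and gd: "\<And>x. g differentiable (at x)"
  shows "lattice_periodic B (pd i g)"
  unfolding lattice_periodic_def
proof (intro allI)
  fix x k
  let ?c = "column k B"
  have "((\<lambda>y. g (y + ?c)) has_derivative frechet_derivative g (at (x + ?c))) (at x)"
    using has_derivative_compose[OF has_derivative_add_const[OF has_derivative_ident]
        gd[of "x + ?c", unfolded frechet_derivative_works]]
    by (simp add: o_def)
  moreover have "(\<lambda>y. g (y + ?c)) = g" using per unfolding lattice_periodic_def by auto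
  ultimately show "pd i g (x + ?c) = pd i g x"
    unfolding pd_def by (metis frechet_derivative_at)
qed

lemma translate_image_eq: "(\<lambda>t. t + c) ` S = {u. u - c \<in> S}" for c :: "'a::ab_group_add"
  by (auto simp: image_iff) (metis diff_add_cancel)

lemma mem_unit_cube_axis:
  "t \<in> cbox 0 (1::real^'n::finite) \<longleftrightarrow> 0 \<le> t$k \<and> t$k \<le> 1 \<and> (\<forall>i. i \<noteq> k \<longrightarrow> 0 \<le> t$i \<and> t$i \<le> 1)"
  by (auto simp: mem_box_cart)

lemma shifted_unit_cube_split:
  fixes k :: "'n::finite"
  assumes "0 \<le> s" "s \<le> 1"
  shows "(\<lambda>t. t + s *\<^sub>R axis k 1) ` cbox 0 (1::real^'n)
       = {t \<in> cbox 0 1. s \<le> t $ k} \<union> (\<lambda>t. t + axis k 1) ` {t \<in> cbox 0 1. t $ k \<le> s}"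
  unfolding translate_image_eq using assms by (auto simp: mem_unit_cube_axis[where k=k] axis_def)

lemma continuous_integrable_on_compact:
  fixes f :: "'a::euclidean_space \<Rightarrow> real"
  assumes "compact S" "continuous_on S f"
  shows "f integrable_on S"
proof -
  have "integrable lborel (\<lambda>x. indicator S x *\<^sub>R f x)"
    using borel_integrable_compact[OF assms] .
  then have "(\<lambda>x. indicator S x *\<^sub>R f x) integrable_on UNIV"
    using has_integral_integral_lborel integrable_on_def by blast
  moreover have "(\<lambda>x. indicator S x *\<^sub>R f x) = (\<lambda>x. if x \<in> S then f x else 0)"
    by (auto simp: indicator_def)
  ultimately show ?thesis
    by (simp add: integrable_restrict_UNIV)
qed

lemma has_integral_translate:
  fixes f :: "'a::euclidean_space \<Rightarrow> real"
  assumes "bounded S" "(f has_integral i) S"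
  shows "((\<lambda>x. f (x + c)) has_integral i) ((\<lambda>x. x - c) ` S)"
proof -
  obtain a where a: "S \<subseteq> cbox (-a) a" using bounded_subset_cbox_symmetric[OF assms(1)] by blast
  have "((\<lambda>x. if x \<in> S then f x else 0) has_integral i) (cbox (-a) a)"
    using has_integral_restrict[OF a] assms(2) by blast
  from has_integral_shift_cbox[OF this, of c]
  have "((\<lambda>x. if x + c \<in> S then f (x + c) else 0) has_integral i) (cbox (-a - c) (a - c))" .
  moreover have "(\<lambda>x. if x + c \<in> S then f (x + c) else 0) = (\<lambda>x. if x \<in> (\<lambda>x. x - c) ` S then f (x + c) else 0)"
    by (force simp: image_iff)
  moreover have "(\<lambda>x. x - c) ` S \<subseteq> cbox (-a - c) (a - c)"
    using a by (auto simp: mem_box inner_diff_left)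
  ultimately show ?thesis using has_integral_restrict by metis
qed

lemma integral_translate_compact:
  fixes h :: "'a::euclidean_space \<Rightarrow> real"
  assumes S: "compact S" and hc: "continuous_on UNIV h"
  shows "integral S (\<lambda>x. h (x + c)) = integral ((\<lambda>x. x + c) ` S) h"
proof -
  let ?T = "(\<lambda>x. x + c) ` S"
  have cT: "compact ?T" using S by (intro compact_continuous_image continuous_intros)
  have "(h has_integral integral ?T h) ?T"
    using cT by (intro integrable_integral continuous_integrable_on_compact continuous_on_subset[OF hc]) auto
  from has_integral_translate[OF compact_imp_bounded[OF cT] this, of c]
  show ?thesis by (simp add: image_image integral_unique)
qed

lemma integral_Un_translate_period:
  fixes h :: "'a::euclidean_space \<Rightarrow> real"
  assumes S: "compact S" and T: "compact T" and hc: "continuous_on UNIV h"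
    and period: "\<And>x. h (x + c) = h x"
    and neg: "negligible (S \<inter> T)" "negligible (S \<inter> (\<lambda>x. x + c) ` T)"
  shows "integral (S \<union> (\<lambda>x. x + c) ` T) h = integral (S \<union> T) h"
proof -
  have int: "(h has_integral integral K h) K" if "compact K" for K
    using that by (intro integrable_integral continuous_integrable_on_compact continuous_on_subset[OF hc]) auto
  have Tc: "compact ((\<lambda>x. x + c) ` T)" using T by (intro compact_continuous_image continuous_intros)
  have "integral T h = integral ((\<lambda>x. x + c) ` T) h"
    using integral_translate_compact[OF T hc, of c] by (simp add: period)
  with has_integral_Un[OF int[OF S] int[OF Tc] neg(2)] has_integral_Un[OF int[OF S] int[OF T] neg(1)]
  show ?thesis by (metis integral_unique)
qed

lemma negligible_matrix_image_coordinate_hyperplane: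
  fixes B :: "real^'n::finite^'n"
  shows "negligible ((*v) B ` {t. t $ k = c})"
proof (rule negligible_differentiable_image_negligible)
  have "{t::real^'n. t $ k = c} = {t. axis k 1 \<bullet> t = c}"
    by (simp add: cart_eq_inner_axis inner_commute)
  then show "negligible {t::real^'n. t $ k = c}"
    by (simp add: negligible_hyperplane axis_eq_0_iff)
qed (auto intro: bounded_linear_imp_differentiable_on matrix_vector_mul_bounded_linear)

lemma fund_dom_eq_image: "fund_dom B = (*v) B ` cbox 0 1"
  unfolding fund_dom_def by (auto simp: mem_box_cart)

lemma compact_fund_dom: "compact (fund_dom B)"
  unfolding fund_dom_eq_image
  by (intro compact_continuous_image linear_continuous_on matrix_vector_mul_bounded_linear compact_cbox)

lemma integral_fund_dom_translate_column:
  fixes B :: "real^'n::finite^'n" and h :: "real^'n \<Rightarrow> real"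
  assumes B: "invertible B" and per: "lattice_periodic B h" and hc: "continuous_on UNIV h"
    and s: "0 \<le> s" "s \<le> 1"
  shows "integral (fund_dom B) (\<lambda>x. h (x + s *\<^sub>R column k B)) = integral (fund_dom B) h"
proof -
  let ?L = "(*v) B" and ?e = "axis k 1 :: real^'n"
  define H where "H = {t \<in> cbox 0 (1::real^'n). s \<le> t $ k}"
  define D where "D = {t \<in> cbox 0 (1::real^'n). t $ k \<le> s}"
  have Le: "?L ?e = column k B" by (simp add: matrix_vector_mult_basis)
  have L_translate: "(\<lambda>x. x + ?L v) ` ?L ` S = ?L ` (\<lambda>t. t + v) ` S" for v S
    by (simp add: image_image matrix_vector_right_distrib)
  have L_Int: "?L ` X \<inter> ?L ` Y = ?L ` (X \<inter> Y)" for X Y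
    using inj_matrix_vector_mult[OF B] by (simp add: image_Int)
  have cpt: "compact (?L ` X)" if "compact X" for X
    using that by (intro compact_continuous_image linear_continuous_on matrix_vector_mul_bounded_linear)
  have cH: "compact H" and cD: "compact D" unfolding H_def D_def
    by (auto intro!: compact_Int_closed closed_Collect_le continuous_intros simp: Collect_conj_eq)
  have "cbox 0 1 = H \<union> D" unfolding H_def D_def by auto
  then have "fund_dom B = ?L ` H \<union> ?L ` D"
    by (simp add: fund_dom_eq_image flip: image_Un)
  moreover have "(\<lambda>x. x + s *\<^sub>R column k B) ` fund_dom B = ?L ` H \<union> (\<lambda>x. x + column k B) ` ?L ` D"
  proof -
    have "(\<lambda>x. x + s *\<^sub>R column k B) ` fund_dom B = ?L ` (\<lambda>t. t + s *\<^sub>R ?e) ` cbox 0 1"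
      using L_translate[of "s *\<^sub>R ?e"] by (simp add: fund_dom_eq_image Le matrix_vector_mult_scaleR)
    also have "\<dots> = ?L ` H \<union> ?L ` (\<lambda>t. t + ?e) ` D"
      by (simp add: shifted_unit_cube_split[OF s] H_def D_def image_Un)
    finally show ?thesis by (simp add: L_translate[of ?e, unfolded Le])
  qed
  moreover have "negligible (?L ` H \<inter> ?L ` D)"
    unfolding L_Int
    by (intro negligible_subset[OF negligible_matrix_image_coordinate_hyperplane[of B k s]] image_mono)
      (auto simp: H_def D_def)
  moreover have "negligible (?L ` H \<inter> (\<lambda>x. x + column k B) ` ?L ` D)"
    unfolding Le[symmetric] L_translate L_Int
    by (intro negligible_subset[OF negligible_matrix_image_coordinate_hyperplane[of B k 1]] image_mono)
      (auto simp: H_def D_def mem_box_cart axis_def, smt (verit))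
  moreover have "integral (fund_dom B) (\<lambda>x. h (x + s *\<^sub>R column k B))
      = integral ((\<lambda>x. x + s *\<^sub>R column k B) ` fund_dom B) h"
    by (rule integral_translate_compact[OF compact_fund_dom hc])
  ultimately show ?thesis
    using integral_Un_translate_period[OF cpt[OF cH] cpt[OF cD] hc, of "column k B"] per
    by (simp add: lattice_periodic_def)
qed

lemma has_real_derivative_along_line:
  assumes "h differentiable (at (x + t *\<^sub>R v))"
  shows "((\<lambda>t. h (x + t *\<^sub>R v)) has_real_derivative frechet_derivative h (at (x + t *\<^sub>R v)) v) (at t)"
proof -
  let ?D = "frechet_derivative h (at (x + t *\<^sub>R v))"
  have "((\<lambda>t. x + t *\<^sub>R v) has_derivative (\<lambda>u. u *\<^sub>R v)) (at t)"
    by (auto intro!: derivative_eq_intros)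
  from has_derivative_compose[OF this frechet_derivative_works[THEN iffD1, OF assms]]
  have "((\<lambda>t. h (x + t *\<^sub>R v)) has_derivative (\<lambda>u. ?D (u *\<^sub>R v))) (at t)"
    by (simp add: o_def)
  moreover have "(\<lambda>u. ?D (u *\<^sub>R v)) = (*) (?D v)"
    using linear_cmul[OF linear_frechet_derivative[OF assms]] by (simp add: fun_eq_iff mult.commute)
  ultimately show ?thesis by (simp add: has_field_derivative_def)
qed

lemma integral_difference_quotient_tendsto:
  fixes h g :: "'a::euclidean_space \<Rightarrow> real"
  assumes P: "compact P" and hc: "continuous_on UNIV h" and gc: "continuous_on UNIV g"
    and hder: "\<And>x t. ((\<lambda>t. h (x + t *\<^sub>R v)) has_real_derivative g (x + t *\<^sub>R v)) (at t)"
    and s: "s \<longlonglongrightarrow> 0" "\<And>m. 0 < s m" "\<And>m. s m \<le> 1"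
  shows "(\<lambda>m. integral P (\<lambda>x. (h (x + s m *\<^sub>R v) - h x) / s m)) \<longlonglongrightarrow> integral P g"
proof -
  define Q where "Q = (\<lambda>m x. (h (x + s m *\<^sub>R v) - h x) / s m)"
  have "compact ((\<lambda>z. g (fst z + snd z *\<^sub>R v)) ` (P \<times> {0..1}))"
    using P by (intro compact_continuous_image continuous_on_compose2[OF gc] continuous_intros compact_Times) auto
  then obtain M where M: "\<And>x t. x \<in> P \<Longrightarrow> t \<in> {0..1} \<Longrightarrow> norm (g (x + t *\<^sub>R v)) \<le> M"
    by (fastforce dest: compact_imp_bounded simp: bounded_iff)
  \<comment> \<open>the mean value theorem bounds every difference quotient by \<open>M\<close> on \<open>P\<close>\<close>
  have bound: "norm (Q m x) \<le> M" if "x \<in> P" for m x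
  proof -
    obtain z where "0 < z" "z < s m" "h (x + s m *\<^sub>R v) - h (x + 0 *\<^sub>R v) = (s m - 0) * g (x + z *\<^sub>R v)"
      using MVT2[OF s(2)[of m], of "\<lambda>t. h (x + t *\<^sub>R v)" "\<lambda>t. g (x + t *\<^sub>R v)"] hder by blast
    with s(2,3)[of m] M[OF that, of z] show ?thesis by (simp add: Q_def)
  qed
  have conv: "(\<lambda>m. Q m x) \<longlonglongrightarrow> g x" for x
  proof -
    have "((\<lambda>t. (h (x + t *\<^sub>R v) - h x) / t) \<longlongrightarrow> g x) (at 0)"
      using hder[of x 0] by (simp add: DERIV_def)
    moreover have "filterlim s (at 0) sequentially"
      using s(1,2) by (auto simp: filterlim_at intro!: always_eventually less_imp_neq[symmetric])
    ultimately show ?thesis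
      unfolding Q_def by (rule filterlim_compose)
  qed
  have Qint: "Q m integrable_on P" for m
    unfolding Q_def using P
    by (intro continuous_integrable_on_compact continuous_intros continuous_on_compose2[OF hc] continuous_on_subset[OF hc])
      (auto simp: less_imp_neq[OF s(2), symmetric])
  have "(\<lambda>m. integral P (Q m)) \<longlonglongrightarrow> integral P g"
    by (rule dominated_convergence(2)[of Q P "\<lambda>x. M" g])
      (use Qint bound conv continuous_integrable_on_compact[OF P] in auto)
  then show ?thesis unfolding Q_def .
qed

lemma integral_fund_dom_derivative_column_eq_0:
  fixes B :: "real^'n::finite^'n" and h :: "real^'n \<Rightarrow> real"
  assumes B: "invertible B" and per: "lattice_periodic B h"
    and hd: "\<And>x. h differentiable (at x)" and hc: "\<And>i. continuous_on UNIV (pd i h)"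
  shows "integral (fund_dom B) (\<lambda>x. frechet_derivative h (at x) (column k B)) = 0"
proof -
  let ?P = "fund_dom B" and ?b = "column k B"
  define s where "s m = inverse (real (Suc m))" for m
  have h_cont: "continuous_on UNIV h"
    using hd differentiable_imp_continuous_within continuous_at_imp_continuous_on by blast
  have "continuous_on UNIV (\<lambda>x. frechet_derivative h (at x) ?b)"
    unfolding frechet_derivative_eq_sum_pd[OF hd] by (intro continuous_intros hc)
  moreover have "s \<longlonglongrightarrow> 0" "\<And>m. 0 < s m" "\<And>m. s m \<le> 1"
    unfolding s_def using LIMSEQ_inverse_real_of_nat by (auto simp: field_simps)
  ultimately have lim: "(\<lambda>m. integral ?P (\<lambda>x. (h (x + s m *\<^sub>R ?b) - h x) / s m))
      \<longlonglongrightarrow> integral ?P (\<lambda>x. frechet_derivative h (at x) ?b)"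
    using integral_difference_quotient_tendsto[OF compact_fund_dom h_cont]
      has_real_derivative_along_line[OF hd] by blast
  have "integral ?P (\<lambda>x. (h (x + s m *\<^sub>R ?b) - h x) / s m) = 0" for m
  proof -
    have int: "g integrable_on ?P" if "continuous_on UNIV g" for g :: "real^'n \<Rightarrow> real"
      using continuous_integrable_on_compact[OF compact_fund_dom continuous_on_subset[OF that]] by blast
    have "(\<lambda>x. h (x + s m *\<^sub>R ?b)) integrable_on ?P"
      by (intro int continuous_on_compose2[OF h_cont] continuous_intros) auto
    then show ?thesis
      using integral_fund_dom_translate_column[OF B per h_cont, of "s m" k] \<open>s m \<le> 1\<close> \<open>0 < s m\<close>
      by (simp add: integral_diff int[OF h_cont])
  qed
  with lim show ?thesis by (simp add: LIMSEQ_const_iff del: integral_divide)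
qed

lemma integral_fund_dom_pd_eq_0:
  fixes B :: "real^'n::finite^'n" and h :: "real^'n \<Rightarrow> real"
  assumes B: "invertible B" and per: "lattice_periodic B h"
    and hd: "\<And>x. h differentiable (at x)" and hc: "\<And>i. continuous_on UNIV (pd i h)"
  shows "integral (fund_dom B) (pd i h) = 0"
proof -
  obtain Bi where "B ** Bi = mat 1" using B invertible_right_inverse by blast
  then obtain c where "B *v c = axis i 1" by (metis matrix_vector_mul_assoc matrix_vector_mul_lid)
  then have axis: "axis i 1 = (\<Sum>k\<in>UNIV. c$k *\<^sub>R column k B)"
    by (simp add: matrix_mult_sum scalar_mult_eq_scaleR)
  have pd_eq: "pd i h x = (\<Sum>k\<in>UNIV. c$k * frechet_derivative h (at x) (column k B))" for x
    using linear_frechet_derivative[OF hd] unfolding pd_def axis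
    by (simp add: linear_sum linear_cmul)
  have int: "(\<lambda>x. frechet_derivative h (at x) v) integrable_on fund_dom B" for v
    unfolding frechet_derivative_eq_sum_pd[OF hd]
    by (intro continuous_integrable_on_compact compact_fund_dom continuous_intros continuous_on_subset[OF hc]) auto
  have "integral (fund_dom B) (pd i h)
      = (\<Sum>k\<in>UNIV. integral (fund_dom B) (\<lambda>x. c$k * frechet_derivative h (at x) (column k B)))"
    unfolding pd_eq by (rule integral_sum) (auto intro: integrable_on_mult_right int)
  also have "\<dots> = 0"
    by (simp add: integral_mult_right integral_fund_dom_derivative_column_eq_0[OF B per hd hc])
  finally show ?thesis .
qed

lemma continuous_on_grad_sq: "smooth f \<Longrightarrow> continuous_on UNIV (grad_sq f)"
  unfolding grad_sq_def[abs_def] by (intro continuous_intros smooth_continuous smooth_pd)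

lemma continuous_on_lap: "smooth f \<Longrightarrow> continuous_on UNIV (lap f)"
  unfolding lap_def[abs_def] by (intro continuous_intros smooth_continuous smooth_pd)

lemma differentiable_exp_comp:
  fixes f :: "'a::real_normed_vector \<Rightarrow> real"
  assumes "f differentiable (at x)"
  shows "(\<lambda>y. exp (a * f y)) differentiable (at x)"
proof -
  from assms obtain D where "(f has_derivative D) (at x)" by (auto simp: differentiable_def)
  then have "((\<lambda>y. exp (a * f y)) has_derivative (\<lambda>h. exp (a * f x) * (a * D h))) (at x)"
    by (auto intro!: derivative_eq_intros)
  then show ?thesis by (auto simp: differentiable_def)
qed

lemma pd_exp_mult_pd:
  assumes sm: "smooth f"
  shows "pd k (\<lambda>y. exp (a * f y) * pd i f y) x
    = exp (a * f x) * (a * pd k f x * pd i f x + pd k (pd i f) x)"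
  using pd_mult[OF differentiable_exp_comp smooth_differentiable[OF smooth_pd[OF sm]]]
    pd_exp_comp[OF smooth_differentiable[OF sm]] smooth_differentiable[OF sm]
  by (simp add: algebra_simps)

lemma sum_pd_exp_mult_pd:
  assumes "smooth f"
  shows "(\<Sum>i\<in>UNIV. pd i (\<lambda>y. exp (a * f y) * pd i f y) x) = exp (a * f x) * (a * grad_sq f x + lap f x)"
  unfolding pd_exp_mult_pd[OF assms] grad_sq_def lap_def
  by (simp add: sum.distrib sum_distrib_left power2_eq_square algebra_simps)

lemma lap_exp_comp:
  assumes sm: "smooth f"
  shows "lap (\<lambda>y. exp (a * f y)) x = a * exp (a * f x) * (a * grad_sq f x + lap f x)"
proof -
  have "(\<lambda>y. exp (a * f y) * pd i f y) differentiable (at x)" for i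
    using smooth_differentiable[OF sm] smooth_differentiable[OF smooth_pd[OF sm]]
    by (auto intro!: differentiable_mult differentiable_exp_comp)
  then have "lap (\<lambda>y. exp (a * f y)) x = a * (\<Sum>i\<in>UNIV. pd i (\<lambda>y. exp (a * f y) * pd i f y) x)"
    by (simp add: lap_def pd_exp_comp[OF smooth_differentiable[OF sm]] mult.assoc pd_const_mult
        sum_distrib_left)
  then show ?thesis by (simp add: sum_pd_exp_mult_pd[OF sm])
qed

lemma grad_sq_exp_comp:
  assumes "\<And>x. f differentiable (at x)"
  shows "grad_sq (\<lambda>y. exp (a * f y)) x = a\<^sup>2 * exp (2 * a * f x) * grad_sq f x"
proof -
  have "exp (2 * a * f x) = exp (a * f x) * exp (a * f x)" by (simp flip: exp_add)
  then show ?thesis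
    by (simp add: grad_sq_def pd_exp_comp[OF assms] sum_distrib_left power2_eq_square algebra_simps)
qed

lemma integral_fund_dom_exp_weighted_lap_eq_0:
  fixes B :: "real^'n::finite^'n"
  assumes B: "invertible B" and per: "lattice_periodic B f" and sm: "smooth f"
  shows "integral (fund_dom B) (\<lambda>x. exp (a * f x) * (a * grad_sq f x + lap f x)) = 0"
proof -
  let ?w = "\<lambda>i y. exp (a * f y) * pd i f y"
  have cont: "continuous_on UNIV (pd k (?w i))" for i k
    unfolding pd_exp_mult_pd[OF sm, abs_def] by (intro continuous_intros smooth_continuous smooth_pd sm)
  have "integral (fund_dom B) (\<lambda>x. \<Sum>i\<in>UNIV. pd i (?w i) x) = (\<Sum>i\<in>UNIV. integral (fund_dom B) (pd i (?w i)))"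
    by (intro integral_sum continuous_integrable_on_compact compact_fund_dom continuous_on_subset[OF cont]) auto
  also have "\<dots> = 0"
  proof (intro sum.neutral ballI integral_fund_dom_pd_eq_0[OF B])
    fix i
    show "lattice_periodic B (?w i)"
      using per lattice_periodic_pd[OF per smooth_differentiable[OF sm]] by (simp add: lattice_periodic_def)
    show "?w i differentiable (at x)" for x
      using smooth_differentiable[OF sm] smooth_differentiable[OF smooth_pd[OF sm]]
      by (auto intro!: differentiable_mult differentiable_exp_comp)
  qed (rule cont)
  finally show ?thesis by (simp add: sum_pd_exp_mult_pd[OF sm])
qed

lemma integral_const_lmeasurable: "S \<in> lmeasurable \<Longrightarrow> integral S (\<lambda>x. c) = c * measure lebesgue S"
  using lmeasure_integral[of S] integral_mult_right[of S c "\<lambda>x. 1::real"] by simp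

lemma integral_powr_le_measure:
  fixes F :: "'a::euclidean_space \<Rightarrow> real"
  assumes P: "compact P" and Fc: "continuous_on P F" and Fpos: "\<And>x. x \<in> P \<Longrightarrow> 0 < F x"
    and \<theta>: "0 < \<theta>" "\<theta> < 1"
  shows "integral P (\<lambda>x. F x powr \<theta>) \<le> integral P F powr \<theta> * measure lebesgue P powr (1 - \<theta>)"
proof (cases "measure lebesgue P = 0")
  case True
  then have "negligible P" using negligible_iff_measure0 lmeasurable_compact[OF P] by blast
  then show ?thesis by (simp add: integral_negligible)
next
  case False
  define I where "I = integral P F"
  define W where "W = measure lebesgue P"
  have mP: "P \<in> lmeasurable" using P by (rule lmeasurable_compact)
  have W: "0 < W" using False unfolding W_def by (simp add: zero_less_measure_iff)
  have int: "g integrable_on P" if "continuous_on P g" for g :: "'a \<Rightarrow> real"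
    using continuous_integrable_on_compact[OF P that] .
  obtain x0 where "x0 \<in> P" and x0: "\<And>y. y \<in> P \<Longrightarrow> F x0 \<le> F y"
    using continuous_attains_inf[OF P _ Fc] False by fastforce
  have "0 < F x0 * W" using Fpos[OF \<open>x0 \<in> P\<close>] W by simp
  also have "F x0 * W \<le> I"
    using integral_le[OF int int x0] Fc
    by (simp add: I_def W_def integral_const_lmeasurable[OF mP])
  finally have I: "0 < I" .
  define c where "c = I powr \<theta> * W powr (1 - \<theta>)"
  have c: "0 < c" using I W by (simp add: c_def)
  \<comment> \<open>Young's inequality applied to \<open>F x / I\<close> and \<open>1 / W\<close>\<close>
  have young: "F x powr \<theta> / c \<le> \<theta> * (F x / I) + (1 - \<theta>) * (1 / W)" if "x \<in> P" for x
    using Youngs_inequality_0[of \<theta> "1 - \<theta>" "F x / I" "1 / W"] \<theta> I W Fpos[OF that]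
    by (simp add: c_def powr_divide)
  have "integral P (\<lambda>x. F x powr \<theta>) / c = integral P (\<lambda>x. F x powr \<theta> / c)" by simp
  also have "\<dots> \<le> integral P (\<lambda>x. \<theta> * (F x / I) + (1 - \<theta>) * (1 / W))"
    using Fpos young c I by (intro integral_le int continuous_intros Fc) (auto simp: less_imp_neq[symmetric])
  also have "\<dots> = \<theta> * (I / I) + (1 - \<theta>) * (W / W)"
    using Fc by (simp add: integral_add int continuous_intros integral_const_lmeasurable[OF mP] I_def W_def)
  also have "\<dots> = 1" using I W by simp
  finally show ?thesis using c by (simp add: c_def I_def W_def)
qed

lemma integral_exp_le:
  fixes f :: "'a::euclidean_space \<Rightarrow> real"
  assumes P: "compact P" and fc: "continuous_on UNIV f"
    and vol: "integral P (\<lambda>x. exp (N * f x)) \<le> V" and q: "0 < q" "q < N"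
  shows "integral P (\<lambda>x. exp (q * f x)) \<le> V powr (q / N) * measure lebesgue P powr ((N - q) / N)"
proof -
  have "integral P (\<lambda>x. exp (q * f x)) = integral P (\<lambda>x. exp (N * f x) powr (q / N))"
    using q by (simp add: powr_def)
  also have "\<dots> \<le> integral P (\<lambda>x. exp (N * f x)) powr (q / N) * measure lebesgue P powr (1 - q / N)"
    using q by (intro integral_powr_le_measure P continuous_intros continuous_on_subset[OF fc]) auto
  also have "\<dots> \<le> V powr (q / N) * measure lebesgue P powr (1 - q / N)"
  proof (intro mult_right_mono powr_mono2 vol)
    show "0 \<le> integral P (\<lambda>x. exp (N * f x))"
      by (intro integral_nonneg continuous_integrable_on_compact P continuous_intros
          continuous_on_subset[OF fc]) auto
  qed (use q in auto)
  also have "1 - q / N = (N - q) / N" using q by (simp add: field_simps)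
  finally show ?thesis .
qed

lemma lap_grad_sq_le_of_scal_conf_ge:
  fixes f :: "real^'n::finite \<Rightarrow> real"
  assumes n: "CARD('n) \<ge> 2" and r: "0 < r" and scal: "scal_conf f x \<ge> - 1 / r"
  shows "2 * lap f x + (real CARD('n) - 2) * grad_sq f x \<le> exp (2 * f x) / ((real CARD('n) - 1) * r)"
proof -
  let ?Q = "2 * lap f x + (real CARD('n) - 2) * grad_sq f x"
  have "scal_conf f x = - ((real CARD('n) - 1) * ?Q / exp (2 * f x))"
    by (simp add: scal_conf_def exp_minus field_simps)
  moreover have "- 1 / r = - (1 / r)" by simp
  ultimately have "(real CARD('n) - 1) * ?Q / exp (2 * f x) \<le> 1 / r" using scal by linarith
  with n r show ?thesis by (simp add: field_simps)
qed

lemma exp_mult_lap_grad_sq_le: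
  assumes "2 * lap f x + (d - 2) * grad_sq f x \<le> exp (2 * f x) / K"
  shows "exp (a * f x) * (2 * lap f x + (d - 2) * grad_sq f x) \<le> exp ((2 + a) * f x) / K"
proof -
  have "exp ((2 + a) * f x) = exp (a * f x) * exp (2 * f x)" by (simp add: algebra_simps flip: exp_add)
  then show ?thesis using mult_left_mono[OF assms, of "exp (a * f x)"] by simp
qed

lemma weighted_lap_exp_comp_eq:
  assumes "smooth f" "\<alpha> \<noteq> 0"
  shows "2 / \<alpha> * lap (\<lambda>y. exp (\<alpha> * f y)) x + (d - 2 - 2 * \<alpha>) * grad_sq f x * exp (\<alpha> * f x)
    = exp (\<alpha> * f x) * (2 * lap f x + (d - 2) * grad_sq f x)"
  using assms by (simp add: lap_exp_comp field_simps)

lemma integral_grad_sq_exp_le: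
  fixes f :: "real^'n::finite \<Rightarrow> real"
  assumes B: "invertible B" and per: "lattice_periodic B f" and sm: "smooth f"
    and pw: "\<And>x. 2 * lap f x + (d - 2) * grad_sq f x \<le> exp (2 * f x) / K"
  shows "(d - 2 - 2 * a) * integral (fund_dom B) (\<lambda>x. grad_sq f x * exp (a * f x))
    \<le> integral (fund_dom B) (\<lambda>x. exp ((2 + a) * f x)) / K"
proof -
  let ?P = "fund_dom B"
  have int: "g integrable_on ?P" if "continuous_on UNIV g" for g :: "real^'n \<Rightarrow> real"
    by (intro continuous_integrable_on_compact compact_fund_dom continuous_on_subset[OF that]) auto
  note cont = continuous_intros smooth_continuous[OF sm] continuous_on_grad_sq[OF sm] continuous_on_lap[OF sm]
  \<comment> \<open>the divergence term integrates to zero, leaving only the gradient term\<close>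
  have "integral ?P (\<lambda>x. exp (a * f x) * (2 * lap f x + (d - 2) * grad_sq f x))
      = integral ?P (\<lambda>x. 2 * (exp (a * f x) * (a * grad_sq f x + lap f x))
          + (d - 2 - 2 * a) * (grad_sq f x * exp (a * f x)))"
    by (simp add: algebra_simps)
  also have "\<dots> = (d - 2 - 2 * a) * integral ?P (\<lambda>x. grad_sq f x * exp (a * f x))"
    by (simp add: integral_add int cont integral_fund_dom_exp_weighted_lap_eq_0[OF B per sm])
  finally have eq: "integral ?P (\<lambda>x. exp (a * f x) * (2 * lap f x + (d - 2) * grad_sq f x))
      = (d - 2 - 2 * a) * integral ?P (\<lambda>x. grad_sq f x * exp (a * f x))" .
  have "exp (a * f x) * (2 * lap f x + (d - 2) * grad_sq f x) \<le> exp ((2 + a) * f x) / K" for x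
    using exp_mult_lap_grad_sq_le[OF pw] .
  then have "integral ?P (\<lambda>x. exp (a * f x) * (2 * lap f x + (d - 2) * grad_sq f x))
      \<le> integral ?P (\<lambda>x. exp ((2 + a) * f x) / K)"
    by (intro integral_le int cont integrable_on_divide)
  then show ?thesis by (simp add: eq)
qed

lemma integral_grad_sq_le:
  fixes f :: "real^'n::finite \<Rightarrow> real"
  assumes B: "invertible B" and per: "lattice_periodic B f" and sm: "smooth f"
    and pw: "\<And>x. 2 * lap f x + (d - 2) * grad_sq f x \<le> exp (2 * f x) / K"
    and K: "0 < K" and d: "3 \<le> d" and vol: "integral (fund_dom B) (\<lambda>x. exp (d * f x)) \<le> V"
  shows "integral (fund_dom B) (grad_sq f)
    \<le> V powr (2 / d) * measure lebesgue (fund_dom B) powr ((d - 2) / d) / K"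
proof -
  let ?P = "fund_dom B"
  have "0 \<le> integral ?P (grad_sq f)"
    by (intro integral_nonneg continuous_integrable_on_compact compact_fund_dom
        continuous_on_subset[OF continuous_on_grad_sq[OF sm]]) (auto simp: grad_sq_def sum_nonneg)
  then have "integral ?P (grad_sq f) \<le> (d - 2) * integral ?P (grad_sq f)"
    using mult_right_mono[of 1 "d - 2"] d by fastforce
  also have "\<dots> \<le> integral ?P (\<lambda>x. exp (2 * f x)) / K"
    using integral_grad_sq_exp_le[OF B per sm pw, of 0] by simp
  also have "\<dots> \<le> V powr (2 / d) * measure lebesgue ?P powr ((d - 2) / d) / K"
    using integral_exp_le[OF compact_fund_dom smooth_continuous[OF sm] vol, of 2] d K
    by (intro divide_right_mono) auto
  finally show ?thesis .
qed

lemma integral_grad_sq_exp_neg_le: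
  fixes f :: "real^'n::finite \<Rightarrow> real"
  assumes B: "invertible B" and per: "lattice_periodic B f" and sm: "smooth f"
    and pw: "\<And>x. 2 * lap f x + (d - 2) * grad_sq f x \<le> exp (2 * f x) / K"
    and K: "0 < K" and d: "-2 < d"
  shows "integral (fund_dom B) (grad_sq (\<lambda>y. exp (- f y))) \<le> measure lebesgue (fund_dom B) / (K * (d + 2))"
proof -
  let ?P = "fund_dom B"
  let ?I = "integral ?P (\<lambda>x. grad_sq f x * exp (-2 * f x))"
  have "grad_sq (\<lambda>y. exp (- f y)) = (\<lambda>x. grad_sq f x * exp (-2 * f x))"
    using grad_sq_exp_comp[OF smooth_differentiable[OF sm], of "-1"] by (simp add: fun_eq_iff)
  moreover have "(2 + d) * ?I \<le> measure lebesgue ?P / K"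
    using integral_grad_sq_exp_le[OF B per sm pw, of "-2"]
    by (simp add: integral_const_lmeasurable lmeasurable_compact compact_fund_dom)
  then have "?I * (K * (d + 2)) \<le> measure lebesgue ?P"
    using K by (simp add: pos_le_divide_eq algebra_simps)
  ultimately show ?thesis using K d by (simp add: pos_le_divide_eq)
qed

lemma integral_grad_sq_exp_half_le:
  fixes f :: "real^'n::finite \<Rightarrow> real"
  assumes B: "invertible B" and per: "lattice_periodic B f" and sm: "smooth f"
    and pw: "\<And>x. 2 * lap f x + (d - 2) * grad_sq f x \<le> exp (2 * f x) / K"
    and K: "0 < K" and vol: "integral (fund_dom B) (\<lambda>x. exp (d * f x)) \<le> V"
    and \<alpha>: "0 < \<alpha>" "\<alpha> < (d - 2) / 2"
  shows "integral (fund_dom B) (grad_sq (\<lambda>y. exp (\<alpha> / 2 * f y)))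
    \<le> \<alpha>\<^sup>2 * V powr ((2 + \<alpha>) / d) * measure lebesgue (fund_dom B) powr ((d - 2 - \<alpha>) / d)
       / (4 * (d - 2 - 2 * \<alpha>) * K)"
proof -
  let ?P = "fund_dom B" and ?I = "integral (fund_dom B) (\<lambda>x. grad_sq f x * exp (\<alpha> * f x))"
  have "grad_sq (\<lambda>y. exp (\<alpha> / 2 * f y)) = (\<lambda>x. \<alpha>\<^sup>2 / 4 * (grad_sq f x * exp (\<alpha> * f x)))"
    using grad_sq_exp_comp[OF smooth_differentiable[OF sm], of "\<alpha> / 2"]
    by (simp add: fun_eq_iff power_divide)
  then have eq: "integral ?P (grad_sq (\<lambda>y. exp (\<alpha> / 2 * f y))) = \<alpha>\<^sup>2 / 4 * ?I" by simp
  let ?X = "V powr ((2 + \<alpha>) / d) * measure lebesgue ?P powr ((d - 2 - \<alpha>) / d)"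
  have "(d - 2 - 2 * \<alpha>) * ?I \<le> integral ?P (\<lambda>x. exp ((2 + \<alpha>) * f x)) / K"
    by (rule integral_grad_sq_exp_le[OF B per sm pw])
  also have "\<dots> \<le> ?X / K"
    using integral_exp_le[OF compact_fund_dom smooth_continuous[OF sm] vol, of "2 + \<alpha>"] \<alpha> K
    by (intro divide_right_mono) (auto simp: diff_diff_eq)
  finally have "?I \<le> ?X / ((d - 2 - 2 * \<alpha>) * K)"
    using \<alpha> K by (simp add: pos_le_divide_eq mult.commute mult.left_commute)
  then have "\<alpha>\<^sup>2 / 4 * ?I \<le> \<alpha>\<^sup>2 / 4 * (?X / ((d - 2 - 2 * \<alpha>) * K))"
    by (rule mult_left_mono) simp
  also have "\<dots> = \<alpha>\<^sup>2 * ?X / (4 * (d - 2 - 2 * \<alpha>) * K)" by (simp add: mult.assoc)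
  finally show ?thesis unfolding eq by (simp only: mult.assoc)
qed

theorem mainTheorem4:
  fixes B :: "real^'n^'n" and f :: "real^'n \<Rightarrow> real" and j :: nat and V0 :: real
  assumes dim: "CARD('n) \<ge> 3"
    and B: "invertible B"
    and per: "lattice_periodic B f"
    and sm: "smooth f"
    and j: "j \<ge> 1"
    and scal: "\<forall>x. scal_conf f x \<ge> - 1 / real j"
    and vol: "integral (fund_dom B) (\<lambda>x. exp (real CARD('n) * f x)) \<le> V0"
  shows "(\<forall>\<alpha>::real. \<alpha> \<noteq> 0 \<longrightarrow> (\<forall>x.
            2 / \<alpha> * lap (\<lambda>y. exp (\<alpha> * f y)) x
            + (real CARD('n) - 2 - 2 * \<alpha>) * grad_sq f x * exp (\<alpha> * f x)
            \<le> exp ((2 + \<alpha>) * f x) / ((real CARD('n) - 1) * real j)))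
    \<and> integral (fund_dom B) (grad_sq f)
        \<le> V0 powr (2 / real CARD('n)) * measure lebesgue (fund_dom B) powr ((real CARD('n) - 2) / real CARD('n))
           / ((real CARD('n) - 1) * real j)
    \<and> integral (fund_dom B) (grad_sq (\<lambda>y. exp (- f y)))
        \<le> measure lebesgue (fund_dom B) / (real j * (real CARD('n) - 1) * (real CARD('n) + 2))
    \<and> (\<forall>\<alpha>::real. 0 < \<alpha> \<and> \<alpha> < (real CARD('n) - 2) / 2 \<longrightarrow>
         integral (fund_dom B) (grad_sq (\<lambda>y. exp (\<alpha> / 2 * f y)))
         \<le> \<alpha>\<^sup>2 * V0 powr ((2 + \<alpha>) / real CARD('n))
            * measure lebesgue (fund_dom B) powr ((real CARD('n) - 2 - \<alpha>) / real CARD('n))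
            / (4 * (real CARD('n) - 2 - 2 * \<alpha>) * (real CARD('n) - 1) * real j))"
proof -
  let ?n = "real CARD('n)"
  have K: "0 < (?n - 1) * real j" using dim j by simp
  have pw: "2 * lap f x + (?n - 2) * grad_sq f x \<le> exp (2 * f x) / ((?n - 1) * real j)" for x
    using lap_grad_sq_le_of_scal_conf_ge[of "real j" f x] dim j scal by simp
  have "2 / \<alpha> * lap (\<lambda>y. exp (\<alpha> * f y)) x + (?n - 2 - 2 * \<alpha>) * grad_sq f x * exp (\<alpha> * f x)
      \<le> exp ((2 + \<alpha>) * f x) / ((?n - 1) * real j)" if "\<alpha> \<noteq> 0" for \<alpha> x
    using exp_mult_lap_grad_sq_le[OF pw] weighted_lap_exp_comp_eq[OF sm that] by simp
  moreover have "integral (fund_dom B) (grad_sq (\<lambda>y. exp (- f y)))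
      \<le> measure lebesgue (fund_dom B) / (real j * (?n - 1) * (?n + 2))"
    using integral_grad_sq_exp_neg_le[OF B per sm pw K] by (simp add: mult_ac)
  ultimately show ?thesis
    using integral_grad_sq_le[OF B per sm pw K _ vol] integral_grad_sq_exp_half_le[OF B per sm pw K vol] dim
    by (simp add: mult.assoc)
qed

end
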